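(* Let $\mathcal{L}_1,\mathcal{L}_2$ be objects of $\mathbf{Cal^0_{Sym}}$. Then $\mathcal{L}_1\circledast\mathcal{L}_2$ is a simple closure space on $\Sigma_1\times\Sigma_2$ (in particular a complete atomistic lattice whose atoms are the singletons), $\mathcal{L}_1\circledast\mathcal{L}_2$ is an object of $\mathbf{Cal^0_{Sym}}$, and the set of coatoms of $\mathcal{L}_1\circledast\mathcal{L}_2$ is exactly $\Sigma'_\circledast$.
   Context: A simple closure space on a nonempty set $\Sigma$ is a family $\mathcal{L}\subseteq 2^\Sigma$ containing $\emptyset$, $\Sigma$ and all singletons and closed under arbitrary intersections (ordered by inclusion). For a complete lattice $\mathcal{L}_i$: $\Sigma_i,\Sigma_i'$ are its sets of atoms and coatoms, $\Sigma[a]$ (resp. $\Sigma'[a]$) the atoms below (resp. coatoms above) $a$, and $\mathsf{Cl}(\omega)=\{\Sigma[a]\,;\,a\in\omega\}$. $\mathbf{Cal^0_{Sym}}$: objects are complete atomistic coatomistic lattices with $\Sigma[x]\cup\Sigma[y]\ne\Sigma$ for all coatoms $x,y$ and $\Sigma'[p]\cup\Sigma'[q]\ne\Sigma'$ for all atoms $p,q$. For $R\subseteq\Sigma_1\times\Sigma_2$, $p=(p_1,p_2)$: $R_1[p]:=\{q_1;(q_1,p_2)\in R\}$, $R_2[p]:=\{q_2;(p_1,q_2)\in R\}$. $\Sigma'_\circledast:=\{R\subsetneqq\Sigma_1\times\Sigma_2\,;\,R_1[p]\in\mathsf{Cl}(\Sigma_1'\cup\{1\}),\ R_2[p]\in\mathsf{Cl}(\Sigma_2'\cup\{1\})\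 \forall p\}$, and $\mathcal{L}_1\circledast\mathcal{L}_2:=\{\bigcap\omega\,;\,\omega\subseteq\Sigma'_\circledast\cup\{\Sigma_1\times\Sigma_2\}\}$ ordered by inclusion. *)

theory Defs
  imports Main
begin

definition is_poset :: "'a set \<Rightarrow> ('a \<Rightarrow> 'a \<Rightarrow> bool) \<Rightarrow> bool" where
  "is_poset A le \<longleftrightarrow> (\<forall>x\<in>A. le x x) \<and>
     (\<forall>x\<in>A. \<forall>y\<in>A. le x y \<and> le y x \<longrightarrow> x = y) \<and>
     (\<forall>x\<in>A. \<forall>y\<in>A. \<forall>z\<in>A. le x y \<and> le y z \<longrightarrow> le x z)"

definition is_lub :: "'a set \<Rightarrow> ('a \<Rightarrow> 'a \<Rightarrow> bool) \<Rightarrow> 'a set \<Rightarrow> 'a \<Rightarrow> bool" where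
  "is_lub A le S x \<longleftrightarrow> x \<in> A \<and> (\<forall>s\<in>S. le s x) \<and> (\<forall>y\<in>A. (\<forall>s\<in>S. le s y) \<longrightarrow> le x y)"

definition is_glb :: "'a set \<Rightarrow> ('a \<Rightarrow> 'a \<Rightarrow> bool) \<Rightarrow> 'a set \<Rightarrow> 'a \<Rightarrow> bool" where
  "is_glb A le S x \<longleftrightarrow> x \<in> A \<and> (\<forall>s\<in>S. le x s) \<and> (\<forall>y\<in>A. (\<forall>s\<in>S. le y s) \<longrightarrow> le y x)"

definition complete_lattice_on :: "'a set \<Rightarrow> ('a \<Rightarrow> 'a \<Rightarrow> bool) \<Rightarrow> bool" where
  "complete_lattice_on A le \<longleftrightarrow> is_poset A le \<and>
     (\<forall>S\<subseteq>A. \<exists>x. is_lub A le S x) \<and> (\<forall>S\<subseteq>A. \<exists>x. is_glb A le S x)"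

definition bot_on :: "'a set \<Rightarrow> ('a \<Rightarrow> 'a \<Rightarrow> bool) \<Rightarrow> 'a" where
  "bot_on A le = (THE b. b \<in> A \<and> (\<forall>x\<in>A. le b x))"

definition top_on :: "'a set \<Rightarrow> ('a \<Rightarrow> 'a \<Rightarrow> bool) \<Rightarrow> 'a" where
  "top_on A le = (THE t. t \<in> A \<and> (\<forall>x\<in>A. le x t))"

definition atoms_on :: "'a set \<Rightarrow> ('a \<Rightarrow> 'a \<Rightarrow> bool) \<Rightarrow> 'a set" where
  "atoms_on A le = {a \<in> A. a \<noteq> bot_on A le \<and> (\<forall>x\<in>A. le x a \<longrightarrow> x = bot_on A le \<or> x = a)}"

definition coatoms_on :: "'a set \<Rightarrow> ('a \<Rightarrow> 'a \<Rightarrow> bool) \<Rightarrow> 'a set" where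
  "coatoms_on A le = {a \<in> A. a \<noteq> top_on A le \<and> (\<forall>x\<in>A. le a x \<longrightarrow> x = top_on A le \<or> x = a)}"

definition atoms_below :: "'a set \<Rightarrow> ('a \<Rightarrow> 'a \<Rightarrow> bool) \<Rightarrow> 'a \<Rightarrow> 'a set" where
  "atoms_below A le x = {p \<in> atoms_on A le. le p x}"

definition coatoms_above :: "'a set \<Rightarrow> ('a \<Rightarrow> 'a \<Rightarrow> bool) \<Rightarrow> 'a \<Rightarrow> 'a set" where
  "coatoms_above A le x = {c \<in> coatoms_on A le. le x c}"

definition atomistic_on :: "'a set \<Rightarrow> ('a \<Rightarrow> 'a \<Rightarrow> bool) \<Rightarrow> bool" where
  "atomistic_on A le \<longleftrightarrow> (\<forall>x\<in>A. is_lub A le (atoms_below A le x) x)"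

definition coatomistic_on :: "'a set \<Rightarrow> ('a \<Rightarrow> 'a \<Rightarrow> bool) \<Rightarrow> bool" where
  "coatomistic_on A le \<longleftrightarrow> (\<forall>x\<in>A. is_glb A le (coatoms_above A le x) x)"

definition Cal0Sym :: "'a set \<Rightarrow> ('a \<Rightarrow> 'a \<Rightarrow> bool) \<Rightarrow> bool" where
  "Cal0Sym A le \<longleftrightarrow> complete_lattice_on A le \<and> atomistic_on A le \<and> coatomistic_on A le \<and>
     (\<forall>x\<in>coatoms_on A le. \<forall>y\<in>coatoms_on A le.
        atoms_below A le x \<union> atoms_below A le y \<noteq> atoms_on A le) \<and>
     (\<forall>p\<in>atoms_on A le. \<forall>q\<in>atoms_on A le.
        coatoms_above A le p \<union> coatoms_above A le q \<noteq> coatoms_on A le)"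

definition Cl :: "'a set \<Rightarrow> ('a \<Rightarrow> 'a \<Rightarrow> bool) \<Rightarrow> 'a set \<Rightarrow> 'a set set" where
  "Cl A le \<omega> = atoms_below A le ` \<omega>"

text \<open>Simple closure space on \<open>\<Sigma>\<close> (nonempty); intersection of the empty family is \<open>\<Sigma>\<close>.\<close>
definition simple_closure_space :: "'a set \<Rightarrow> 'a set set \<Rightarrow> bool" where
  "simple_closure_space \<Sigma> L \<longleftrightarrow> \<Sigma> \<noteq> {} \<and> L \<subseteq> Pow \<Sigma> \<and> {} \<in> L \<and> \<Sigma> \<in> L \<and>
     (\<forall>p\<in>\<Sigma>. {p} \<in> L) \<and> (\<forall>\<omega>\<subseteq>L. \<Sigma> \<inter> \<Inter>\<omega> \<in> L)"

definition R1 :: "('a \<times> 'b) set \<Rightarrow> 'a \<times> 'b \<Rightarrow> 'a set" where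
  "R1 R p = {q1. (q1, snd p) \<in> R}"

definition R2 :: "('a \<times> 'b) set \<Rightarrow> 'a \<times> 'b \<Rightarrow> 'b set" where
  "R2 R p = {q2. (fst p, q2) \<in> R}"

definition coatoms_tensor ::
  "'a set \<Rightarrow> ('a \<Rightarrow> 'a \<Rightarrow> bool) \<Rightarrow> 'b set \<Rightarrow> ('b \<Rightarrow> 'b \<Rightarrow> bool) \<Rightarrow> ('a \<times> 'b) set set" where
  "coatoms_tensor L1 le1 L2 le2 =
     {R. R \<subset> atoms_on L1 le1 \<times> atoms_on L2 le2 \<and>
        (\<forall>p \<in> atoms_on L1 le1 \<times> atoms_on L2 le2.
           R1 R p \<in> Cl L1 le1 (coatoms_on L1 le1 \<union> {top_on L1 le1}) \<and>
           R2 R p \<in> Cl L2 le2 (coatoms_on L2 le2 \<union> {top_on L2 le2}))}"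

definition tensor ::
  "'a set \<Rightarrow> ('a \<Rightarrow> 'a \<Rightarrow> bool) \<Rightarrow> 'b set \<Rightarrow> ('b \<Rightarrow> 'b \<Rightarrow> bool) \<Rightarrow> ('a \<times> 'b) set set" where
  "tensor L1 le1 L2 le2 =
     {(atoms_on L1 le1 \<times> atoms_on L2 le2) \<inter> \<Inter>\<omega> | \<omega>.
        \<omega> \<subseteq> coatoms_tensor L1 le1 L2 le2 \<union> {atoms_on L1 le1 \<times> atoms_on L2 le2}}"

end

theory Submission
  imports Defs
begin

text \<open>
  Write \<open>S = \<Sigma>1 \<times> \<Sigma>2\<close> and \<open>C = \<Sigma>'_\<circledast>\<close>. The tensor product is the closure system on \<open>S\<close>
  generated by \<open>C\<close>: a set \<open>X \<subseteq> S\<close> is closed iff every point outside \<open>X\<close> is cut off from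
  \<open>X\<close> by some member of \<open>C\<close>. For coatoms \<open>c1, c2\<close> of the factors the ``cross''
  \<open>{(x, y). x \<le> c1 \<or> y \<le> c2}\<close> lies in \<open>C\<close>; as coatoms separate atoms, crosses cut off
  any point from any other, so the empty set and all singletons are closed.

  The heart of the proof is that \<open>C\<close> is an antichain. Rows and columns of members of \<open>C\<close> lie
  in \<open>Cl(\<Sigma>' \<union> {1})\<close>, whose members other than \<open>\<Sigma>i\<close> are pairwise incomparable, so if
  \<open>R \<subset> R'\<close> then every row or column on which \<open>R\<close> and \<open>R'\<close> differ is full in \<open>R'\<close>.
  Take \<open>(a, b) \<in> R' - R\<close> and \<open>(x, y) \<notin> R'\<close>. The rows \<open>a\<close> and \<open>x\<close> of \<open>R\<close> are proper,
  so by \<open>\<Sigma>[c] \<union> \<Sigma>[d] \<noteq> \<Sigma>\<close> some \<open>y0\<close> lies in neither. Then \<open>(a, y0) \<in> R' - R\<close>, so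
  column \<open>y0\<close> of \<open>R'\<close> is full and \<open>(x, y0) \<in> R' - R\<close>; hence row \<open>x\<close> of \<open>R'\<close> is full,
  contradicting \<open>(x, y) \<notin> R'\<close>.

  Therefore \<open>C\<close> is exactly the set of coatoms and every closed set is an intersection of
  coatoms. The two symmetry conditions of \<open>Cal0Sym\<close> transfer from the factors, the first by a
  similar row-and-column argument, the second via crosses.
\<close>

lemma is_poset_antisym:
  "is_poset L le \<Longrightarrow> x \<in> L \<Longrightarrow> y \<in> L \<Longrightarrow> le x y \<Longrightarrow> le y x \<Longrightarrow> x = y"
  unfolding is_poset_def by blast

lemma is_lub_least: "is_lub L le S x \<Longrightarrow> y \<in> L \<Longrightarrow> (\<And>s. s \<in> S \<Longrightarrow> le s y) \<Longrightarrow> le x y"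
  unfolding is_lub_def by blast

lemma is_glb_greatest: "is_glb L le S x \<Longrightarrow> y \<in> L \<Longrightarrow> (\<And>s. s \<in> S \<Longrightarrow> le y s) \<Longrightarrow> le y x"
  unfolding is_glb_def by blast

lemma atoms_onD:
  assumes "a \<in> atoms_on L le"
  shows "a \<in> L" "a \<noteq> bot_on L le" "\<And>x. x \<in> L \<Longrightarrow> le x a \<Longrightarrow> x = bot_on L le \<or> x = a"
  using assms unfolding atoms_on_def by auto

lemma atoms_on_subset: "atoms_on L le \<subseteq> L"
  unfolding atoms_on_def by blast

lemma coatoms_onD:
  assumes "c \<in> coatoms_on L le"
  shows "c \<in> L" "c \<noteq> top_on L le" "\<And>x. x \<in> L \<Longrightarrow> le c x \<Longrightarrow> x = top_on L le \<or> x = c"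
  using assms unfolding coatoms_on_def by auto

lemma Cal0SymD:
  assumes "Cal0Sym L le"
  shows "complete_lattice_on L le" "atomistic_on L le" "coatomistic_on L le"
  using assms unfolding Cal0Sym_def complete_lattice_on_def by auto

lemma le_top_on:
  assumes "complete_lattice_on L le" "x \<in> L"
  shows "le x (top_on L le)"
proof -
  have poset: "is_poset L le" and "\<exists>t. is_lub L le L t"
    using assms(1) unfolding complete_lattice_on_def by auto
  then obtain t where t: "t \<in> L" "\<forall>x\<in>L. le x t"
    unfolding is_lub_def by blast
  have "top_on L le = t"
    unfolding top_on_def
  proof (rule the_equality)
    fix t' assume "t' \<in> L \<and> (\<forall>x\<in>L. le x t')"
    then show "t' = t"
      by (intro is_poset_antisym[OF poset]) (use t in auto)
  qed (use t in simp)
  with t assms(2) show ?thesis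
    by simp
qed

lemma atoms_below_top_on:
  assumes "complete_lattice_on L le"
  shows "atoms_below L le (top_on L le) = atoms_on L le"
  using le_top_on[OF assms] atoms_on_subset[of L le] unfolding atoms_below_def by auto

section \<open>Atoms and coatoms of an object of \<open>Cal0Sym\<close>\<close>

abbreviation Cl_coatoms :: "'a set \<Rightarrow> ('a \<Rightarrow> 'a \<Rightarrow> bool) \<Rightarrow> 'a set set" where
  "Cl_coatoms L le \<equiv> Cl L le (coatoms_on L le \<union> {top_on L le})"

lemma atoms_on_in_Cl_coatoms: "complete_lattice_on L le \<Longrightarrow> atoms_on L le \<in> Cl_coatoms L le"
  unfolding Cl_def using atoms_below_top_on by (metis UnI2 image_eqI insertI1)

lemma atoms_below_coatom_in_Cl_coatoms:
  "c \<in> coatoms_on L le \<Longrightarrow> atoms_below L le c \<in> Cl_coatoms L le"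
  unfolding Cl_def by blast

lemma Cl_coatoms_subset_atoms_on: "X \<in> Cl_coatoms L le \<Longrightarrow> X \<subseteq> atoms_on L le"
  unfolding Cl_def atoms_below_def by blast

lemma Cl_coatomsE:
  assumes "Cal0Sym L le" "X \<in> Cl_coatoms L le" "X \<noteq> atoms_on L le"
  obtains c where "c \<in> coatoms_on L le" "X = atoms_below L le c"
proof -
  obtain z where z: "z \<in> coatoms_on L le \<union> {top_on L le}" "X = atoms_below L le z"
    using assms(2) unfolding Cl_def by blast
  with assms(3) have "z \<noteq> top_on L le"
    using atoms_below_top_on[OF Cal0SymD(1)[OF assms(1)]] by metis
  with z that show ?thesis by blast
qed

lemma Cl_coatoms_psubset_eq_atoms_on:
  assumes "Cal0Sym L le" "X \<in> Cl_coatoms L le" "Y \<in> Cl_coatoms L le" "X \<subset> Y"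
  shows "Y = atoms_on L le"
proof (rule ccontr)
  assume "Y \<noteq> atoms_on L le"
  then obtain d where d: "d \<in> coatoms_on L le" "Y = atoms_below L le d"
    using Cl_coatomsE[OF assms(1,3)] by metis
  have "X \<noteq> atoms_on L le"
    using assms(4) Cl_coatoms_subset_atoms_on[OF assms(3)] by blast
  then obtain c where c: "c \<in> coatoms_on L le" "X = atoms_below L le c"
    using Cl_coatomsE[OF assms(1,2)] by metis
  have "is_lub L le (atoms_below L le c) c"
    using Cal0SymD(2)[OF assms(1)] coatoms_onD(1)[OF c(1)] unfolding atomistic_on_def by simp
  then have "le c d"
    by (rule is_lub_least[OF _ coatoms_onD(1)[OF d(1)]])
      (use assms(4) c d in \<open>auto simp: atoms_below_def\<close>)
  then have "d = c"
    using coatoms_onD(2,3)[OF c(1)] coatoms_onD(1,2)[OF d(1)] by metis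
  with assms(4) c d show False by simp
qed

lemma Cl_coatoms_common_gap:
  assumes "Cal0Sym L le" "X \<in> Cl_coatoms L le" "Y \<in> Cl_coatoms L le"
    and "X \<noteq> atoms_on L le" "Y \<noteq> atoms_on L le"
  obtains z where "z \<in> atoms_on L le" "z \<notin> X" "z \<notin> Y"
proof -
  obtain c d where "c \<in> coatoms_on L le" "X = atoms_below L le c"
    and "d \<in> coatoms_on L le" "Y = atoms_below L le d"
    using Cl_coatomsE assms by metis
  moreover have "\<forall>x\<in>coatoms_on L le. \<forall>y\<in>coatoms_on L le.
      atoms_below L le x \<union> atoms_below L le y \<noteq> atoms_on L le"
    using assms(1) unfolding Cal0Sym_def by simp
  ultimately show ?thesis
    using that unfolding atoms_below_def by blast
qed

lemma coatom_separates_atoms: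
  assumes "Cal0Sym L le" "p \<in> atoms_on L le" "q \<in> atoms_on L le" "p \<noteq> q"
  obtains c where "c \<in> coatoms_on L le" "le p c" "\<not> le q c"
proof (rule ccontr)
  assume no_coatom: "\<not> thesis"
  have "is_glb L le (coatoms_above L le p) p"
    using Cal0SymD(3)[OF assms(1)] atoms_onD(1)[OF assms(2)] unfolding coatomistic_on_def by simp
  then have "le q p"
    by (rule is_glb_greatest) (use no_coatom that atoms_onD(1)[OF assms(3)] in
        \<open>auto simp: coatoms_above_def\<close>)
  then show False
    using atoms_onD(2,3)[OF assms(2)] atoms_onD(1,2)[OF assms(3)] assms(4) by metis
qed

lemma coatom_avoids_atoms:
  assumes "Cal0Sym L le" "p \<in> atoms_on L le" "q \<in> atoms_on L le"
  obtains c where "c \<in> coatoms_on L le" "\<not> le p c" "\<not> le q c"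
proof -
  have "coatoms_above L le p \<union> coatoms_above L le q \<noteq> coatoms_on L le"
    using assms unfolding Cal0Sym_def by simp
  then show ?thesis
    using that unfolding coatoms_above_def by blast
qed

section \<open>Simple closure spaces\<close>

lemma top_on_subset_Pow: "T \<subseteq> Pow S \<Longrightarrow> S \<in> T \<Longrightarrow> top_on T (\<subseteq>) = S"
  unfolding top_on_def by (rule the_equality) auto

lemma bot_on_subset_empty: "{} \<in> T \<Longrightarrow> bot_on T (\<subseteq>) = {}"
  unfolding bot_on_def by (rule the_equality) auto

lemma simple_closure_space_complete_lattice:
  assumes "simple_closure_space S T"
  shows "complete_lattice_on T (\<subseteq>)"
proof -
  have T: "T \<subseteq> Pow S" "\<And>\<Omega>. \<Omega> \<subseteq> T \<Longrightarrow> S \<inter> \<Inter>\<Omega> \<in> T"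
    using assms unfolding simple_closure_space_def by auto
  have "is_glb T (\<subseteq>) \<Omega> (S \<inter> \<Inter>\<Omega>)" if "\<Omega> \<subseteq> T" for \<Omega>
    using T that unfolding is_glb_def by blast
  moreover have "is_lub T (\<subseteq>) \<Omega> (S \<inter> \<Inter>{Y \<in> T. \<Union>\<Omega> \<subseteq> Y})" if "\<Omega> \<subseteq> T" for \<Omega>
  proof -
    have "S \<inter> \<Inter>{Y \<in> T. \<Union>\<Omega> \<subseteq> Y} \<in> T"
      by (rule T(2)) blast
    with T(1) that show ?thesis
      unfolding is_lub_def by blast
  qed
  ultimately show ?thesis
    unfolding complete_lattice_on_def is_poset_def by blast
qed

lemma simple_closure_space_atoms_on:
  assumes "simple_closure_space S T"
  shows "atoms_on T (\<subseteq>) = {{p} | p. p \<in> S}"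
proof -
  have T: "T \<subseteq> Pow S" "\<forall>p\<in>S. {p} \<in> T" and bot: "bot_on T (\<subseteq>) = {}"
    using assms bot_on_subset_empty unfolding simple_closure_space_def by auto
  show ?thesis
  proof (intro set_eqI iffI)
    fix a assume "a \<in> atoms_on T (\<subseteq>)"
    then have a: "a \<in> T" "a \<noteq> {}" "\<forall>X\<in>T. X \<subseteq> a \<longrightarrow> X = {} \<or> X = a"
      unfolding atoms_on_def bot by auto
    then obtain p where "p \<in> a"
      by blast
    with a T have "p \<in> S" "a = {p}"
      by blast+
    then show "a \<in> {{p} | p. p \<in> S}"
      by blast
  next
    fix a assume "a \<in> {{p} | p. p \<in> S}"
    with T show "a \<in> atoms_on T (\<subseteq>)"
      unfolding atoms_on_def bot by (auto simp: subset_singleton_iff)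
  qed
qed

lemma simple_closure_space_atoms_below:
  assumes "simple_closure_space S T" "X \<in> T"
  shows "atoms_below T (\<subseteq>) X = {{p} | p. p \<in> X}"
  using assms unfolding atoms_below_def simple_closure_space_atoms_on[OF assms(1)]
    simple_closure_space_def by blast

lemma simple_closure_space_atomistic:
  assumes "simple_closure_space S T"
  shows "atomistic_on T (\<subseteq>)"
  unfolding atomistic_on_def
proof
  fix X assume "X \<in> T"
  then show "is_lub T (\<subseteq>) (atoms_below T (\<subseteq>) X) X"
    unfolding is_lub_def simple_closure_space_atoms_below[OF assms \<open>X \<in> T\<close>] by blast
qed

section \<open>Closure systems generated by a family of sets\<close>

definition generated_closure :: "'a set \<Rightarrow> 'a set set \<Rightarrow> 'a set set" where
  "generated_closure S C = {S \<inter> \<Inter>\<omega> | \<omega>. \<omega> \<subseteq> C \<union> {S}}"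

lemma mem_generated_closure_iff:
  "X \<in> generated_closure S C \<longleftrightarrow> X \<subseteq> S \<and> (\<forall>p\<in>S - X. \<exists>R\<in>C. X \<subseteq> R \<and> p \<notin> R)"
proof
  assume "X \<in> generated_closure S C"
  then obtain \<omega> where "X = S \<inter> \<Inter>\<omega>" "\<omega> \<subseteq> C \<union> {S}"
    unfolding generated_closure_def by blast
  then show "X \<subseteq> S \<and> (\<forall>p\<in>S - X. \<exists>R\<in>C. X \<subseteq> R \<and> p \<notin> R)"
    by blast
next
  assume X: "X \<subseteq> S \<and> (\<forall>p\<in>S - X. \<exists>R\<in>C. X \<subseteq> R \<and> p \<notin> R)"
  then have "X = S \<inter> \<Inter>{R \<in> C. X \<subseteq> R}"
    by blast
  then show "X \<in> generated_closure S C"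
    unfolding generated_closure_def by blast
qed

lemma generated_closure_Inter:
  assumes "\<Omega> \<subseteq> generated_closure S C"
  shows "S \<inter> \<Inter>\<Omega> \<in> generated_closure S C"
  unfolding mem_generated_closure_iff
proof (intro conjI ballI)
  fix p assume p: "p \<in> S - S \<inter> \<Inter>\<Omega>"
  then obtain X where X: "X \<in> \<Omega>" "p \<notin> X"
    by blast
  moreover from X(1) assms have "X \<in> generated_closure S C"
    by blast
  ultimately obtain R where "R \<in> C" "X \<subseteq> R" "p \<notin> R"
    using p unfolding mem_generated_closure_iff by blast
  with X show "\<exists>R\<in>C. S \<inter> \<Inter>\<Omega> \<subseteq> R \<and> p \<notin> R"
    by blast
qed blast

lemma simple_closure_space_generated_closure:
  assumes "S \<noteq> {}"
    and avoid: "\<And>p. p \<in> S \<Longrightarrow> \<exists>R\<in>C. p \<notin> R"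
    and separate: "\<And>p q. p \<in> S \<Longrightarrow> q \<in> S \<Longrightarrow> p \<noteq> q \<Longrightarrow> \<exists>R\<in>C. p \<in> R \<and> q \<notin> R"
  shows "simple_closure_space S (generated_closure S C)"
  unfolding simple_closure_space_def
proof (intro conjI ballI allI impI)
  show "generated_closure S C \<subseteq> Pow S"
    by (auto simp: mem_generated_closure_iff)
  show "{} \<in> generated_closure S C"
    using avoid by (auto simp: mem_generated_closure_iff)
  show "S \<in> generated_closure S C"
    by (simp add: mem_generated_closure_iff)
  show "{p} \<in> generated_closure S C" if "p \<in> S" for p
    using that separate by (auto simp: mem_generated_closure_iff)
qed (use assms(1) generated_closure_Inter in auto)

lemma top_on_generated_closure: "top_on (generated_closure S C) (\<subseteq>) = S"
  by (rule top_on_subset_Pow) (auto simp: mem_generated_closure_iff)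

locale proper_antichain =
  fixes S :: "'a set" and C :: "'a set set"
  assumes subset: "C \<subseteq> Pow S" and top_notin: "S \<notin> C"
    and antichain: "\<And>R R'. R \<in> C \<Longrightarrow> R' \<in> C \<Longrightarrow> R \<subseteq> R' \<Longrightarrow> R = R'"
begin

lemma generators_in_generated_closure: "R \<in> C \<Longrightarrow> R \<in> generated_closure S C"
  using subset unfolding mem_generated_closure_iff by blast

lemma coatoms_on_generated_closure: "coatoms_on (generated_closure S C) (\<subseteq>) = C"
proof (intro set_eqI iffI)
  fix X assume X: "X \<in> coatoms_on (generated_closure S C) (\<subseteq>)"
  then have "X \<in> generated_closure S C" "X \<noteq> S"
    using coatoms_onD(1,2)[OF X] by (simp_all add: top_on_generated_closure)
  then obtain R where R: "R \<in> C" "X \<subseteq> R"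
    unfolding mem_generated_closure_iff by blast
  moreover have "R \<in> generated_closure S C"
    using R(1) by (rule generators_in_generated_closure)
  ultimately have "R = top_on (generated_closure S C) (\<subseteq>) \<or> R = X"
    by (intro coatoms_onD(3)[OF X])
  with R(1) top_notin have "R = X"
    by (auto simp: top_on_generated_closure)
  with R show "X \<in> C"
    by simp
next
  fix X assume X: "X \<in> C"
  have "Y = X" if Y: "Y \<in> generated_closure S C" "X \<subseteq> Y" "Y \<noteq> S" for Y
  proof -
    obtain R where "R \<in> C" "Y \<subseteq> R"
      using Y(1,3) unfolding mem_generated_closure_iff by blast
    with Y(2) antichain[OF X] show "Y = X"
      by blast
  qed
  moreover have "X \<in> generated_closure S C"
    using X by (rule generators_in_generated_closure)
  ultimately show "X \<in> coatoms_on (generated_closure S C) (\<subseteq>)"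
    using X top_notin unfolding coatoms_on_def top_on_generated_closure by auto
qed

lemma coatoms_above_generated_closure:
  "coatoms_above (generated_closure S C) (\<subseteq>) X = {R \<in> C. X \<subseteq> R}"
  unfolding coatoms_above_def coatoms_on_generated_closure by simp

lemma coatomistic_generated_closure: "coatomistic_on (generated_closure S C) (\<subseteq>)"
  unfolding coatomistic_on_def
proof
  fix X assume X: "X \<in> generated_closure S C"
  have "Y \<subseteq> X" if Y: "Y \<in> generated_closure S C" "\<forall>R\<in>{R \<in> C. X \<subseteq> R}. Y \<subseteq> R" for Y
  proof
    fix y assume "y \<in> Y"
    show "y \<in> X"
    proof (rule ccontr)
      assume "y \<notin> X"
      moreover have "y \<in> S"
        using Y(1) \<open>y \<in> Y\<close> unfolding mem_generated_closure_iff by blast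
      ultimately obtain R where "R \<in> C" "X \<subseteq> R" "y \<notin> R"
        using X unfolding mem_generated_closure_iff by blast
      with Y(2) \<open>y \<in> Y\<close> show False
        by blast
    qed
  qed
  with X show "is_glb (generated_closure S C) (\<subseteq>) (coatoms_above (generated_closure S C) (\<subseteq>) X) X"
    unfolding is_glb_def coatoms_above_generated_closure by blast
qed

lemma Cal0Sym_generated_closure:
  assumes scs: "simple_closure_space S (generated_closure S C)"
    and common_gap: "\<And>R R'. R \<in> C \<Longrightarrow> R' \<in> C \<Longrightarrow> \<exists>p\<in>S. p \<notin> R \<and> p \<notin> R'"
    and avoid: "\<And>p q. p \<in> S \<Longrightarrow> q \<in> S \<Longrightarrow> \<exists>R\<in>C. p \<notin> R \<and> q \<notin> R"
  shows "Cal0Sym (generated_closure S C) (\<subseteq>)"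
  unfolding Cal0Sym_def
proof (intro conjI ballI)
  let ?T = "generated_closure S C"
  fix R R' assume "R \<in> coatoms_on ?T (\<subseteq>)" "R' \<in> coatoms_on ?T (\<subseteq>)"
  then have R: "R \<in> C" "R \<in> ?T" and R': "R' \<in> C" "R' \<in> ?T"
    by (simp_all add: coatoms_on_generated_closure generators_in_generated_closure)
  obtain p where "p \<in> S" "p \<notin> R" "p \<notin> R'"
    using common_gap[OF R(1) R'(1)] by blast
  then have "{p} \<in> atoms_on ?T (\<subseteq>) - atoms_below ?T (\<subseteq>) R - atoms_below ?T (\<subseteq>) R'"
    unfolding simple_closure_space_atoms_on[OF scs] simple_closure_space_atoms_below[OF scs R(2)]
      simple_closure_space_atoms_below[OF scs R'(2)] by blast
  then show "atoms_below ?T (\<subseteq>) R \<union> atoms_below ?T (\<subseteq>) R' \<noteq> atoms_on ?T (\<subseteq>)"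
    by blast
next
  let ?T = "generated_closure S C"
  fix a b assume "a \<in> atoms_on ?T (\<subseteq>)" "b \<in> atoms_on ?T (\<subseteq>)"
  then obtain p q where pq: "a = {p}" "b = {q}" "p \<in> S" "q \<in> S"
    unfolding simple_closure_space_atoms_on[OF scs] by blast
  then obtain R where "R \<in> C" "p \<notin> R" "q \<notin> R"
    using avoid by blast
  with pq have "R \<in> coatoms_on ?T (\<subseteq>) - coatoms_above ?T (\<subseteq>) a - coatoms_above ?T (\<subseteq>) b"
    unfolding coatoms_above_generated_closure coatoms_on_generated_closure by blast
  then show "coatoms_above ?T (\<subseteq>) a \<union> coatoms_above ?T (\<subseteq>) b \<noteq> coatoms_on ?T (\<subseteq>)"
    by blast
qed (use scs simple_closure_space_complete_lattice simple_closure_space_atomistic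
      coatomistic_generated_closure in auto)

end

section \<open>The tensor product\<close>

lemma tensor_eq_generated_closure:
  "tensor L1 le1 L2 le2 =
     generated_closure (atoms_on L1 le1 \<times> atoms_on L2 le2) (coatoms_tensor L1 le1 L2 le2)"
  unfolding tensor_def generated_closure_def ..

locale Cal0Sym_pair =
  fixes L1 :: "'a set" and le1 :: "'a \<Rightarrow> 'a \<Rightarrow> bool"
    and L2 :: "'b set" and le2 :: "'b \<Rightarrow> 'b \<Rightarrow> bool"
  assumes Cal0Sym1: "Cal0Sym L1 le1" and Cal0Sym2: "Cal0Sym L2 le2"
begin

abbreviation "\<Sigma>1 \<equiv> atoms_on L1 le1"
abbreviation "\<Sigma>2 \<equiv> atoms_on L2 le2"
abbreviation "S \<equiv> \<Sigma>1 \<times> \<Sigma>2"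
abbreviation "C \<equiv> coatoms_tensor L1 le1 L2 le2"

lemma mem_coatoms_tensor_iff:
  "R \<in> C \<longleftrightarrow> R \<subseteq> S \<and> R \<noteq> S \<and>
     (\<forall>u\<in>\<Sigma>1. \<forall>v\<in>\<Sigma>2.
        {x. (x, v) \<in> R} \<in> Cl_coatoms L1 le1 \<and> {y. (u, y) \<in> R} \<in> Cl_coatoms L2 le2)"
  unfolding coatoms_tensor_def R1_def R2_def by auto

lemma coatoms_tensor_column:
  "R \<in> C \<Longrightarrow> u \<in> \<Sigma>1 \<Longrightarrow> v \<in> \<Sigma>2 \<Longrightarrow> {x. (x, v) \<in> R} \<in> Cl_coatoms L1 le1"
  unfolding mem_coatoms_tensor_iff by blast

lemma coatoms_tensor_row:
  "R \<in> C \<Longrightarrow> u \<in> \<Sigma>1 \<Longrightarrow> v \<in> \<Sigma>2 \<Longrightarrow> {y. (u, y) \<in> R} \<in> Cl_coatoms L2 le2"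
  unfolding mem_coatoms_tensor_iff by blast

lemma coatoms_tensor_gap:
  assumes "R \<in> C"
  obtains x y where "x \<in> \<Sigma>1" "y \<in> \<Sigma>2" "(x, y) \<notin> R"
  using assms unfolding mem_coatoms_tensor_iff by blast

definition cross :: "'a \<Rightarrow> 'b \<Rightarrow> ('a \<times> 'b) set" where
  "cross c1 c2 = {(x, y) \<in> S. le1 x c1 \<or> le2 y c2}"

lemma cross_in_coatoms_tensor:
  assumes c1: "c1 \<in> coatoms_on L1 le1" and c2: "c2 \<in> coatoms_on L2 le2"
    and u: "u \<in> \<Sigma>1" "\<not> le1 u c1" and v: "v \<in> \<Sigma>2" "\<not> le2 v c2"
  shows "cross c1 c2 \<in> C"
  unfolding mem_coatoms_tensor_iff
proof (intro conjI ballI)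
  show "cross c1 c2 \<subseteq> S" "cross c1 c2 \<noteq> S"
    using u v unfolding cross_def by auto
  fix x y assume xy: "x \<in> \<Sigma>1" "y \<in> \<Sigma>2"
  have "{x. (x, y) \<in> cross c1 c2} = (if le2 y c2 then \<Sigma>1 else atoms_below L1 le1 c1)"
    using xy unfolding cross_def atoms_below_def by auto
  then show "{x. (x, y) \<in> cross c1 c2} \<in> Cl_coatoms L1 le1"
    using atoms_on_in_Cl_coatoms[OF Cal0SymD(1)[OF Cal0Sym1]]
      atoms_below_coatom_in_Cl_coatoms[OF c1] by simp
  have "{y. (x, y) \<in> cross c1 c2} = (if le1 x c1 then \<Sigma>2 else atoms_below L2 le2 c2)"
    using xy unfolding cross_def atoms_below_def by auto
  then show "{y. (x, y) \<in> cross c1 c2} \<in> Cl_coatoms L2 le2"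
    using atoms_on_in_Cl_coatoms[OF Cal0SymD(1)[OF Cal0Sym2]]
      atoms_below_coatom_in_Cl_coatoms[OF c2] by simp
qed

lemma coatoms_tensor_avoid:
  assumes "p \<in> S" "q \<in> S"
  shows "\<exists>R\<in>C. p \<notin> R \<and> q \<notin> R"
proof -
  obtain p1 p2 q1 q2 where pq: "p = (p1, p2)" "q = (q1, q2)"
    and atoms: "p1 \<in> \<Sigma>1" "q1 \<in> \<Sigma>1" "p2 \<in> \<Sigma>2" "q2 \<in> \<Sigma>2"
    using assms by auto
  obtain c1 where c1: "c1 \<in> coatoms_on L1 le1" "\<not> le1 p1 c1" "\<not> le1 q1 c1"
    using coatom_avoids_atoms[OF Cal0Sym1 atoms(1,2)] by blast
  obtain c2 where c2: "c2 \<in> coatoms_on L2 le2" "\<not> le2 p2 c2" "\<not> le2 q2 c2"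
    using coatom_avoids_atoms[OF Cal0Sym2 atoms(3,4)] by blast
  have "cross c1 c2 \<in> C"
    using cross_in_coatoms_tensor[OF c1(1) c2(1) atoms(1) c1(2) atoms(3) c2(2)] .
  moreover have "p \<notin> cross c1 c2" "q \<notin> cross c1 c2"
    using pq c1 c2 unfolding cross_def by auto
  ultimately show ?thesis
    by blast
qed

lemma coatoms_tensor_separate:
  assumes "p \<in> S" "q \<in> S" "p \<noteq> q"
  shows "\<exists>R\<in>C. p \<in> R \<and> q \<notin> R"
proof -
  obtain p1 p2 q1 q2 where pq: "p = (p1, p2)" "q = (q1, q2)"
    and atoms: "p1 \<in> \<Sigma>1" "q1 \<in> \<Sigma>1" "p2 \<in> \<Sigma>2" "q2 \<in> \<Sigma>2"
    using assms by auto
  obtain c1 c2 where c: "c1 \<in> coatoms_on L1 le1" "c2 \<in> coatoms_on L2 le2"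
    and q_out: "\<not> le1 q1 c1" "\<not> le2 q2 c2" and p_in: "le1 p1 c1 \<or> le2 p2 c2"
  proof (cases "p1 = q1")
    case True
    with assms(3) pq have "p2 \<noteq> q2"
      by simp
    then obtain c2 where "c2 \<in> coatoms_on L2 le2" "le2 p2 c2" "\<not> le2 q2 c2"
      using coatom_separates_atoms[OF Cal0Sym2 atoms(3,4)] by blast
    moreover obtain c1 where "c1 \<in> coatoms_on L1 le1" "\<not> le1 q1 c1"
      using coatom_avoids_atoms[OF Cal0Sym1 atoms(2,2)] by blast
    ultimately show ?thesis
      using that by blast
  next
    case False
    then obtain c1 where "c1 \<in> coatoms_on L1 le1" "le1 p1 c1" "\<not> le1 q1 c1"
      using coatom_separates_atoms[OF Cal0Sym1 atoms(1,2)] by blast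
    moreover obtain c2 where "c2 \<in> coatoms_on L2 le2" "\<not> le2 q2 c2"
      using coatom_avoids_atoms[OF Cal0Sym2 atoms(4,4)] by blast
    ultimately show ?thesis
      using that by blast
  qed
  have "cross c1 c2 \<in> C"
    using cross_in_coatoms_tensor[OF c atoms(2) q_out(1) atoms(4) q_out(2)] .
  moreover have "p \<in> cross c1 c2" "q \<notin> cross c1 c2"
    using pq atoms p_in q_out unfolding cross_def by auto
  ultimately show ?thesis
    by blast
qed

lemma coatoms_tensor_antichain:
  assumes R: "R \<in> C" and R': "R' \<in> C" and "R \<subseteq> R'"
  shows "R = R'"
proof (rule ccontr)
  have full_row: "{y. (a, y) \<in> R'} = \<Sigma>2" if "(a, b) \<in> R'" "(a, b) \<notin> R" for a b
  proof -
    have ab: "a \<in> \<Sigma>1" "b \<in> \<Sigma>2"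
      using that(1) R' unfolding mem_coatoms_tensor_iff by auto
    have "{y. (a, y) \<in> R} \<subset> {y. (a, y) \<in> R'}"
      using that \<open>R \<subseteq> R'\<close> by blast
    then show ?thesis
      using Cl_coatoms_psubset_eq_atoms_on[OF Cal0Sym2] coatoms_tensor_row[OF R ab]
        coatoms_tensor_row[OF R' ab] by blast
  qed
  have full_column: "{x. (x, b) \<in> R'} = \<Sigma>1" if "(a, b) \<in> R'" "(a, b) \<notin> R" for a b
  proof -
    have ab: "a \<in> \<Sigma>1" "b \<in> \<Sigma>2"
      using that(1) R' unfolding mem_coatoms_tensor_iff by auto
    have "{x. (x, b) \<in> R} \<subset> {x. (x, b) \<in> R'}"
      using that \<open>R \<subseteq> R'\<close> by blast
    then show ?thesis
      using Cl_coatoms_psubset_eq_atoms_on[OF Cal0Sym1] coatoms_tensor_column[OF R ab]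
        coatoms_tensor_column[OF R' ab] by blast
  qed
  assume "R \<noteq> R'"
  then obtain a b where ab: "(a, b) \<in> R'" "(a, b) \<notin> R"
    using \<open>R \<subseteq> R'\<close> by auto
  then have a: "a \<in> \<Sigma>1" and b: "b \<in> \<Sigma>2"
    using R' unfolding mem_coatoms_tensor_iff by auto
  obtain x y where x: "x \<in> \<Sigma>1" and y: "y \<in> \<Sigma>2" and "(x, y) \<notin> R'"
    using coatoms_tensor_gap[OF R'] .
  then have row_x: "{y. (x, y) \<in> R} = {y. (x, y) \<in> R'}"
    using full_row \<open>R \<subseteq> R'\<close> by blast
  obtain y0 where y0: "y0 \<in> \<Sigma>2" "(a, y0) \<notin> R" "(x, y0) \<notin> R"
  proof (rule Cl_coatoms_common_gap[OF Cal0Sym2 coatoms_tensor_row[OF R a b]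
        coatoms_tensor_row[OF R x b]])
    show "{y. (a, y) \<in> R} \<noteq> \<Sigma>2" "{y'. (x, y') \<in> R} \<noteq> \<Sigma>2"
      using ab b row_x y \<open>(x, y) \<notin> R'\<close> by blast+
  qed (use that in blast)
  have "(a, y0) \<in> R'"
    using full_row[OF ab] y0(1) by blast
  with y0(2) have "(x, y0) \<in> R'"
    using full_column x by blast
  with row_x y0(3) show False
    by blast
qed

lemma coatoms_tensor_common_gap:
  assumes R: "R \<in> C" and R': "R' \<in> C"
  shows "\<exists>p\<in>S. p \<notin> R \<and> p \<notin> R'"
proof -
  obtain a b where a: "a \<in> \<Sigma>1" and b: "b \<in> \<Sigma>2" and "(a, b) \<notin> R"
    using coatoms_tensor_gap[OF R] .
  obtain x y where x: "x \<in> \<Sigma>1" and y: "y \<in> \<Sigma>2" and "(x, y) \<notin> R'"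
    using coatoms_tensor_gap[OF R'] .
  obtain y0 where y0: "y0 \<in> \<Sigma>2" "(a, y0) \<notin> R" "(x, y0) \<notin> R'"
  proof (rule Cl_coatoms_common_gap[OF Cal0Sym2 coatoms_tensor_row[OF R a b]
        coatoms_tensor_row[OF R' x y]])
    show "{y. (a, y) \<in> R} \<noteq> \<Sigma>2" "{y'. (x, y') \<in> R'} \<noteq> \<Sigma>2"
      using \<open>(a, b) \<notin> R\<close> \<open>(x, y) \<notin> R'\<close> b y by blast+
  qed (use that in blast)
  obtain x0 where "x0 \<in> \<Sigma>1" "(x0, y0) \<notin> R" "(x0, y0) \<notin> R'"
  proof (rule Cl_coatoms_common_gap[OF Cal0Sym1 coatoms_tensor_column[OF R a y0(1)]
        coatoms_tensor_column[OF R' x y0(1)]])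
    show "{x. (x, y0) \<in> R} \<noteq> \<Sigma>1" "{x'. (x', y0) \<in> R'} \<noteq> \<Sigma>1"
      using y0 a x by blast+
  qed (use that in blast)
  with y0(1) show ?thesis
    by blast
qed

lemma proper_antichain_coatoms_tensor: "proper_antichain S C"
proof
  show "C \<subseteq> Pow S" "S \<notin> C"
    by (auto simp: mem_coatoms_tensor_iff)
qed (rule coatoms_tensor_antichain)

lemma simple_closure_space_tensor:
  assumes "\<Sigma>1 \<noteq> {}" "\<Sigma>2 \<noteq> {}"
  shows "simple_closure_space S (tensor L1 le1 L2 le2)"
  unfolding tensor_eq_generated_closure
proof (rule simple_closure_space_generated_closure)
  show "S \<noteq> {}"
    using assms by simp
  show "\<exists>R\<in>C. p \<notin> R" if "p \<in> S" for p
    using coatoms_tensor_avoid[OF that that] by blast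
qed (rule coatoms_tensor_separate)

lemma coatoms_on_tensor: "coatoms_on (tensor L1 le1 L2 le2) (\<subseteq>) = C"
  unfolding tensor_eq_generated_closure
  using proper_antichain_coatoms_tensor by (rule proper_antichain.coatoms_on_generated_closure)

lemma Cal0Sym_tensor:
  assumes "\<Sigma>1 \<noteq> {}" "\<Sigma>2 \<noteq> {}"
  shows "Cal0Sym (tensor L1 le1 L2 le2) (\<subseteq>)"
  using simple_closure_space_tensor[OF assms] coatoms_tensor_common_gap coatoms_tensor_avoid
  unfolding tensor_eq_generated_closure
  by (intro proper_antichain.Cal0Sym_generated_closure[OF proper_antichain_coatoms_tensor]) auto

end

theorem lemma4p3:
  fixes L1 :: "'a set" and le1 :: "'a \<Rightarrow> 'a \<Rightarrow> bool"
    and L2 :: "'b set" and le2 :: "'b \<Rightarrow> 'b \<Rightarrow> bool"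
  assumes "Cal0Sym L1 le1" and "Cal0Sym L2 le2"
    and "atoms_on L1 le1 \<noteq> {}" and "atoms_on L2 le2 \<noteq> {}"
  shows "simple_closure_space (atoms_on L1 le1 \<times> atoms_on L2 le2) (tensor L1 le1 L2 le2)
    \<and> complete_lattice_on (tensor L1 le1 L2 le2) (\<subseteq>)
    \<and> atomistic_on (tensor L1 le1 L2 le2) (\<subseteq>)
    \<and> atoms_on (tensor L1 le1 L2 le2) (\<subseteq>) = {{p} | p. p \<in> atoms_on L1 le1 \<times> atoms_on L2 le2}
    \<and> Cal0Sym (tensor L1 le1 L2 le2) (\<subseteq>)
    \<and> coatoms_on (tensor L1 le1 L2 le2) (\<subseteq>) = coatoms_tensor L1 le1 L2 le2"
proof -
  interpret Cal0Sym_pair L1 le1 L2 le2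
    using assms(1,2) by unfold_locales
  have scs: "simple_closure_space (atoms_on L1 le1 \<times> atoms_on L2 le2) (tensor L1 le1 L2 le2)"
    using simple_closure_space_tensor[OF assms(3,4)] .
  show ?thesis
    using scs simple_closure_space_complete_lattice[OF scs] simple_closure_space_atomistic[OF scs]
      simple_closure_space_atoms_on[OF scs] Cal0Sym_tensor[OF assms(3,4)] coatoms_on_tensor
    by blast
qed

end
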